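(* If $G$ is a complete multipartite graph on $2n$ vertices with independence number $\alpha(G)\leq n$, then $G$ contains at least $n!$ perfect matchings.
   Context: A graph $G$ is complete multipartite if there is a partition of $V(G)$ such that two vertices are adjacent if and only if they lie in different parts. $\alpha(G)$ is the size of a largest independent (edge-free) vertex set. A perfect matching is a set of vertex-disjoint edges covering all vertices. *)

theory Defs
  imports Main
begin

definition simple_graph :: "'a set \<Rightarrow> 'a set set \<Rightarrow> bool" where
  "simple_graph V E \<longleftrightarrow> finite V \<and> (\<forall>e\<in>E. e \<subseteq> V \<and> card e = 2)"

definition complete_multipartite :: "'a set \<Rightarrow> 'a set set \<Rightarrow> bool" where
  "complete_multipartite V E \<longleftrightarrow>
     (\<exists>P. (\<forall>A\<in>P. A \<noteq> {}) \<and> \<Union>P = V \<and>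
          (\<forall>A\<in>P. \<forall>B\<in>P. A \<noteq> B \<longrightarrow> A \<inter> B = {}) \<and>
          (\<forall>u\<in>V. \<forall>v\<in>V. {u, v} \<in> E \<longleftrightarrow> (\<exists>A\<in>P. \<exists>B\<in>P. A \<noteq> B \<and> u \<in> A \<and> v \<in> B)))"

definition independent_set :: "'a set \<Rightarrow> 'a set set \<Rightarrow> 'a set \<Rightarrow> bool" where
  "independent_set V E S \<longleftrightarrow> S \<subseteq> V \<and> (\<forall>u\<in>S. \<forall>v\<in>S. {u, v} \<notin> E)"

definition independence_number :: "'a set \<Rightarrow> 'a set set \<Rightarrow> nat" where
  "independence_number V E = Max (card ` {S. independent_set V E S})"

definition perfect_matching :: "'a set \<Rightarrow> 'a set set \<Rightarrow> 'a set set \<Rightarrow> bool" where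
  "perfect_matching V E M \<longleftrightarrow> M \<subseteq> E \<and>
     (\<forall>e\<in>M. \<forall>f\<in>M. e \<noteq> f \<longrightarrow> e \<inter> f = {}) \<and> \<Union>M = V"

end

theory Submission
  imports Defs
begin

text \<open>Induction on \<open>n\<close>, with the partition into parts kept fixed while vertices are deleted.
  Every part contains at most \<open>n\<close> of the \<open>2n\<close> vertices. Take a vertex \<open>u\<close> in a largest
  part \<open>A\<close>; the at least \<open>n\<close> vertices \<open>w\<close> outside \<open>A\<close> are all adjacent to \<open>u\<close>. Deleting
  \<open>u\<close> and \<open>w\<close> leaves \<open>2(n - 1)\<close> vertices with at most \<open>n - 1\<close> in each part: \<open>A\<close> and the
  part of \<open>w\<close> lose a vertex, and any other part with \<open>n\<close> vertices would cover, together
  with \<open>A\<close>, all vertices but miss \<open>w\<close>. Adding the edge \<open>{u, w}\<close> to the perfect matchings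
  of the rest gives different matchings for different \<open>w\<close>, hence at least \<open>n \<cdot> (n - 1)!\<close>.\<close>

lemma finite_perfect_matchings:
  assumes "finite V"
  shows "finite {M. perfect_matching V E M}"
proof (rule finite_subset)
  show "{M. perfect_matching V E M} \<subseteq> Pow (Pow V)"
    unfolding perfect_matching_def by auto
qed (use assms in simp)

lemma perfect_matching_insert_edge:
  assumes "perfect_matching (V - {u, w}) E M" "{u, w} \<in> E" "u \<in> V" "w \<in> V"
  shows "perfect_matching V E (insert {u, w} M)"
proof -
  have "e \<inter> {u, w} = {}" if "e \<in> M" for e
    using assms(1) that unfolding perfect_matching_def by blast
  then show ?thesis
    using assms unfolding perfect_matching_def by auto
qed

lemma edge_notin_perfect_matching_Diff:
  assumes "perfect_matching (V - {u, w}) E M"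
  shows "{u, w'} \<notin> M"
proof
  assume "{u, w'} \<in> M"
  then have "u \<in> \<Union>M" by blast
  with assms show False unfolding perfect_matching_def by simp
qed

lemma sum_card_perfect_matchings_le:
  assumes "finite V" "u \<in> V" "W \<subseteq> V - {u}" "\<And>w. w \<in> W \<Longrightarrow> {u, w} \<in> E"
  shows "(\<Sum>w\<in>W. card {M. perfect_matching (V - {u, w}) E M}) \<le> card {M. perfect_matching V E M}"
proof -
  let ?PM = "\<lambda>w. {M. perfect_matching (V - {u, w}) E M}"
  have "finite W" using assms(1,3) finite_subset by blast
  then have "(\<Sum>w\<in>W. card (?PM w)) = card (SIGMA w:W. ?PM w)"
    using assms(1) by (simp add: finite_perfect_matchings)
  also have "\<dots> \<le> card {M. perfect_matching V E M}"
  proof (rule card_inj_on_le)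
    show "inj_on (\<lambda>(w, M). insert {u, w} M) (SIGMA w:W. ?PM w)"
    proof (rule inj_onI, clarsimp)
      fix w M w' M'
      assume M: "perfect_matching (V - {u, w}) E M" and M': "perfect_matching (V - {u, w'}) E M'"
        and eq: "insert {u, w} M = insert {u, w'} M'"
      have "{u, w} \<notin> M'" "{u, w'} \<notin> M" "{u, w} \<notin> M"
        using M M' edge_notin_perfect_matching_Diff by metis+
      have "{u, w} = {u, w'}"
        using eq \<open>{u, w} \<notin> M'\<close> by blast
      then have "w = w'"
        by (metis doubleton_eq_iff)
      with eq show "w = w' \<and> M = M'"
        using \<open>{u, w} \<notin> M\<close> \<open>{u, w} \<notin> M'\<close> by (simp add: insert_ident)
    qed
    show "(\<lambda>(w, M). insert {u, w} M) ` (SIGMA w:W. ?PM w) \<subseteq> {M. perfect_matching V E M}"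
      using assms(2-4) by (auto intro: perfect_matching_insert_edge)
  qed (use assms(1) finite_perfect_matchings in blast)
  finally show ?thesis .
qed

lemma card_le_independence_number:
  assumes "finite V" "independent_set V E S"
  shows "card S \<le> independence_number V E"
proof -
  have "{S. independent_set V E S} \<subseteq> Pow V"
    unfolding independent_set_def by auto
  then have "finite (card ` {S. independent_set V E S})"
    using assms(1) by (meson finite_Pow_iff finite_imageI finite_subset)
  then show ?thesis
    unfolding independence_number_def using assms(2) by (intro Max_ge) auto
qed

lemma card_part_Diff_pair_le:
  fixes P :: "'a set set"
  assumes "finite V" "card V = 2 * Suc m"
    and disjoint: "\<forall>A\<in>P. \<forall>B\<in>P. A \<noteq> B \<longrightarrow> A \<inter> B = {}"
    and small: "\<forall>B\<in>P. card (B \<inter> V) \<le> Suc m"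
    and "A \<in> P" and A_max: "\<forall>B\<in>P. card (B \<inter> V) \<le> card (A \<inter> V)"
    and u: "u \<in> A \<inter> V" and w: "w \<in> V - A" and "B \<in> P"
  shows "card (B \<inter> (V - {u, w})) \<le> m"
proof -
  consider "B = A" | "w \<in> B" | "B \<noteq> A" "w \<notin> B" by blast
  then show ?thesis
  proof cases
    case 1
    have "card (B \<inter> (V - {u, w})) \<le> card (A \<inter> V - {u})"
      using \<open>finite V\<close> 1 by (intro card_mono) auto
    then show ?thesis using u small \<open>A \<in> P\<close> \<open>finite V\<close> by fastforce
  next
    case 2
    have "card (B \<inter> (V - {u, w})) \<le> card (B \<inter> V - {w})"
      using \<open>finite V\<close> by (intro card_mono) auto
    then show ?thesis using 2 w small \<open>B \<in> P\<close> \<open>finite V\<close> by fastforce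
  next
    case 3
    have "card (B \<inter> V) \<le> m"
    proof (rule ccontr)
      assume "\<not> ?thesis"
      then have "card (A \<inter> V) + card (B \<inter> V) = card V"
        using small A_max \<open>A \<in> P\<close> \<open>B \<in> P\<close> \<open>card V = 2 * Suc m\<close> by fastforce
      moreover have "(A \<inter> V) \<inter> (B \<inter> V) = {}"
        using disjoint \<open>A \<in> P\<close> \<open>B \<in> P\<close> 3 by blast
      ultimately have "card ((A \<inter> V) \<union> (B \<inter> V)) = card V"
        using \<open>finite V\<close> by (simp add: card_Un_disjoint)
      then have "(A \<inter> V) \<union> (B \<inter> V) = V"
        using \<open>finite V\<close> by (intro card_subset_eq) auto
      then show False using w 3 by blast
    qed
    moreover have "card (B \<inter> (V - {u, w})) \<le> card (B \<inter> V)"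
      using \<open>finite V\<close> by (intro card_mono) auto
    ultimately show ?thesis by simp
  qed
qed

lemma obtain_largest_part:
  fixes P :: "'a set set"
  assumes "finite V" "x \<in> V" "V \<subseteq> \<Union>P"
  obtains A where "A \<in> P" "A \<inter> V \<noteq> {}" "\<forall>B\<in>P. card (B \<inter> V) \<le> card (A \<inter> V)"
proof -
  obtain A0 where "A0 \<in> P" "x \<in> A0" using assms(2,3) by blast
  have "card (B \<inter> V) < Suc (card V)" for B
    using assms(1) by (simp add: card_mono le_imp_less_Suc)
  then obtain A where "A \<in> P" and A_max: "\<forall>B\<in>P. card (B \<inter> V) \<le> card (A \<inter> V)"
    using ex_has_greatest_nat[of "\<lambda>A. A \<in> P" A0 "\<lambda>A. card (A \<inter> V)"] \<open>A0 \<in> P\<close> by blast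
  have "card (A0 \<inter> V) > 0"
    using \<open>x \<in> A0\<close> assms(1,2) by (auto simp: card_gt_0_iff)
  then have "A \<inter> V \<noteq> {}"
    using A_max \<open>A0 \<in> P\<close> by fastforce
  with \<open>A \<in> P\<close> A_max show thesis by (intro that)
qed

lemma fact_le_card_perfect_matchings:
  fixes P :: "'a set set"
  assumes disjoint: "\<forall>A\<in>P. \<forall>B\<in>P. A \<noteq> B \<longrightarrow> A \<inter> B = {}"
    and edges: "\<And>A B u v. A \<in> P \<Longrightarrow> B \<in> P \<Longrightarrow> A \<noteq> B \<Longrightarrow> u \<in> A \<Longrightarrow> v \<in> B \<Longrightarrow> {u, v} \<in> E"
    and "finite V" "card V = 2 * n" "V \<subseteq> \<Union>P" "\<forall>A\<in>P. card (A \<inter> V) \<le> n"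
  shows "fact n \<le> card {M. perfect_matching V E M}"
  using assms(3-6)
proof (induction n arbitrary: V)
  case 0
  then have "{} \<in> {M. perfect_matching V E M}"
    unfolding perfect_matching_def by simp
  then show ?case
    using finite_perfect_matchings[OF \<open>finite V\<close>] by (auto simp: Suc_le_eq card_gt_0_iff)
next
  case (Suc m)
  obtain x where "x \<in> V" using Suc.prems(2) by fastforce
  then obtain A where "A \<in> P" "A \<inter> V \<noteq> {}" and A_max: "\<forall>B\<in>P. card (B \<inter> V) \<le> card (A \<inter> V)"
    using obtain_largest_part Suc.prems(1,3) by metis
  then obtain u where u: "u \<in> A \<inter> V" by blast
  define W where "W = V - A"
  have "card V = card W + card (A \<inter> V)"
    unfolding W_def using card_Int_Diff[OF Suc.prems(1), of A] by (simp add: Int_commute)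
  then have "Suc m \<le> card W"
    using Suc.prems(2,4) \<open>A \<in> P\<close> by fastforce
  have IH: "fact m \<le> card {M. perfect_matching (V - {u, w}) E M}" if "w \<in> W" for w
  proof (rule Suc.IH)
    show "card (V - {u, w}) = 2 * m"
      using that u Suc.prems(1,2) unfolding W_def by (auto simp: card_Diff_subset card_insert_if)
    show "\<forall>B\<in>P. card (B \<inter> (V - {u, w})) \<le> m"
      using card_part_Diff_pair_le[OF Suc.prems(1,2) disjoint Suc.prems(4) \<open>A \<in> P\<close> A_max u] that
      unfolding W_def by blast
  qed (use Suc.prems in auto)
  have "fact (Suc m) = Suc m * fact m" by simp
  also have "\<dots> \<le> card W * fact m"
    using \<open>Suc m \<le> card W\<close> by (rule mult_right_mono) simp
  also have "\<dots> \<le> (\<Sum>w\<in>W. card {M. perfect_matching (V - {u, w}) E M})"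
    using sum_mono[OF IH] by simp
  also have "\<dots> \<le> card {M. perfect_matching V E M}"
  proof (rule sum_card_perfect_matchings_le)
    show "{u, w} \<in> E" if "w \<in> W" for w
      using that u Suc.prems(3) edges[OF \<open>A \<in> P\<close>] unfolding W_def by blast
  qed (use Suc.prems(1) u in \<open>auto simp: W_def\<close>)
  finally show ?case .
qed

lemma complete_multipartite_parts:
  assumes "complete_multipartite V E"
  obtains P where "\<Union>P = V" and "\<forall>A\<in>P. \<forall>B\<in>P. A \<noteq> B \<longrightarrow> A \<inter> B = {}"
    and "\<And>A B u v. A \<in> P \<Longrightarrow> B \<in> P \<Longrightarrow> A \<noteq> B \<Longrightarrow> u \<in> A \<Longrightarrow> v \<in> B \<Longrightarrow> {u, v} \<in> E"
    and "\<And>A. A \<in> P \<Longrightarrow> independent_set V E A"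
proof -
  obtain P where P: "(\<forall>A\<in>P. A \<noteq> {}) \<and> \<Union>P = V \<and>
      (\<forall>A\<in>P. \<forall>B\<in>P. A \<noteq> B \<longrightarrow> A \<inter> B = {}) \<and>
      (\<forall>u\<in>V. \<forall>v\<in>V. {u, v} \<in> E \<longleftrightarrow> (\<exists>A\<in>P. \<exists>B\<in>P. A \<noteq> B \<and> u \<in> A \<and> v \<in> B))"
    using assms unfolding complete_multipartite_def by (rule exE)
  then have "\<Union>P = V" and disjoint: "\<forall>A\<in>P. \<forall>B\<in>P. A \<noteq> B \<longrightarrow> A \<inter> B = {}"
    and adj: "\<And>u v. u \<in> V \<Longrightarrow> v \<in> V \<Longrightarrow>
      {u, v} \<in> E \<longleftrightarrow> (\<exists>A\<in>P. \<exists>B\<in>P. A \<noteq> B \<and> u \<in> A \<and> v \<in> B)"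
    by simp_all
  have in_V: "x \<in> V" if "A \<in> P" "x \<in> A" for A x
    using that \<open>\<Union>P = V\<close> by blast
  have edge: "{u, v} \<in> E"
    if "A \<in> P" "B \<in> P" "A \<noteq> B" "u \<in> A" "v \<in> B" for A B u v
    using adj[OF in_V in_V] that by blast
  have no_edge: "{u, v} \<notin> E" if A: "A \<in> P" "u \<in> A" "v \<in> A" for A u v
  proof
    assume "{u, v} \<in> E"
    then obtain A' B' where "A' \<in> P" "B' \<in> P" "A' \<noteq> B'" "u \<in> A'" "v \<in> B'"
      using adj[OF in_V[OF A(1,2)] in_V[OF A(1,3)]] by blast
    then have "A' = A" "B' = A" using A disjoint by blast+
    with \<open>A' \<noteq> B'\<close> show False by simp
  qed
  have "independent_set V E A" if "A \<in> P" for A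
    unfolding independent_set_def using that in_V no_edge by blast
  with \<open>\<Union>P = V\<close> disjoint edge show thesis by (rule that)
qed

theorem lemma27:
  fixes V :: "'a set" and E :: "'a set set" and n :: nat
  assumes "simple_graph V E"
    and "complete_multipartite V E"
    and "card V = 2 * n"
    and "independence_number V E \<le> n"
  shows "card {M. perfect_matching V E M} \<ge> fact n"
proof -
  have "finite V" using assms(1) unfolding simple_graph_def by blast
  obtain P where "\<Union>P = V" and disjoint: "\<forall>A\<in>P. \<forall>B\<in>P. A \<noteq> B \<longrightarrow> A \<inter> B = {}"
    and edges: "\<And>A B u v. A \<in> P \<Longrightarrow> B \<in> P \<Longrightarrow> A \<noteq> B \<Longrightarrow> u \<in> A \<Longrightarrow> v \<in> B \<Longrightarrow> {u, v} \<in> E"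
    and independent: "\<And>A. A \<in> P \<Longrightarrow> independent_set V E A"
    using complete_multipartite_parts[OF assms(2)] by blast
  have "card (A \<inter> V) \<le> n" if "A \<in> P" for A
  proof -
    have "A \<inter> V = A" using that \<open>\<Union>P = V\<close> by blast
    then show ?thesis
      using card_le_independence_number[OF \<open>finite V\<close> independent[OF that]] assms(4) by simp
  qed
  then show ?thesis
    using fact_le_card_perfect_matchings[of P E V n] disjoint edges \<open>finite V\<close> assms(3) \<open>\<Union>P = V\<close>
    by blast
qed

end
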